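(* Let $d,e,r\geq 2$ be integers, and let $S(d,e,r)$ be the smallest set of positive integers such that (a) $r\in S$; (b) $n\in S$ whenever $n^e\in S$; (c) $(n+d)^e\in S$ whenever $n\in S$. Then $$S(d,e,r)=\{n\geq 2 : n\not\equiv 0 \pmod d\}$$ if and only if all of the following hold: (1) $d=p$ is prime; (2) $r\not\equiv 0\pmod p$; (3) $e$ is a multiple of the radical of $p-1$, i.e. if $p-1=p_1^{n_1}\cdots p_k^{n_k}$ with distinct primes $p_i$ and $n_i\geq 1$, then $p_1p_2\cdots p_k \mid e$.
   Context: "Smallest" means contained in every set of positive integers satisfying (a), (b), (c). The set $S(d,e,r)$ is called a maximal solution when it equals $\{n\geq 2 : n\not\equiv 0 \pmod d\}$. *)

theory Defs
  imports "HOL-Computational_Algebra.Primes"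
begin

inductive_set Sset :: "nat \<Rightarrow> nat \<Rightarrow> nat \<Rightarrow> nat set" for d e r where
  base: "r > 0 \<Longrightarrow> r \<in> Sset d e r"
| root: "n > 0 \<Longrightarrow> n ^ e \<in> Sset d e r \<Longrightarrow> n \<in> Sset d e r"
| shift: "n \<in> Sset d e r \<Longrightarrow> (n + d) ^ e \<in> Sset d e r"

end

theory Submission
  imports Defs "HOL-Number_Theory.Number_Theory"
begin

(* Both maps n \<mapsto> n^e and n \<mapsto> n + d preserve, for a prime q dividing d, whether q divides n,
   and, when q * k = \<phi>(d) with q coprime to e, whether n^k = 1 (mod d).  So every element
   of S(d,e,r) agrees with r on these properties.  If d is composite, a prime factor q < d of d
   and d + 1 cannot both lie in S; if d = p is prime and q divides p - 1 but not e, then 1 + p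
   and g + p for a primitive root g cannot both lie in S.
   Conversely, S is closed under n \<mapsto> n + d (the root of the shift) and under e-th roots, and it
   meets the residue class of r^(e^K) for every K.  If every prime factor of p - 1 divides e,
   then p - 1 divides e^K for large K, so S contains some s = 1 (mod p) by Fermat; for n \<ge> 2
   prime to p and K large, n^(e^K) is also 1 (mod p) and at least s, hence in S, and so is n. *)

lemma coprime_prime_right_iff:
  fixes p n :: nat
  assumes "prime p"
  shows "coprime n p \<longleftrightarrow> \<not> p dvd n"
  using assms by (metis coprime_absorb_left coprime_commute not_prime_unit prime_imp_coprime)

lemma coprime_add_self_left_iff:
  fixes n d :: nat
  shows "coprime (n + d) d \<longleftrightarrow> coprime n d"
  by (metis gcd_add1 coprime_iff_gcd_eq_1)

lemma Sset_pos: "n \<in> Sset d e r \<Longrightarrow> n > 0"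
  by (induction rule: Sset.induct) auto

lemma Sset_ge_2:
  assumes "n \<in> Sset d e r" "r \<ge> 2" "e > 0"
  shows "n \<ge> 2"
  using assms(1)
proof induction
  case (root n)
  then show ?case by (cases "n = 1") auto
next
  case (shift n)
  have "n + d \<le> (n + d) ^ e" using assms(3) shift.IH by (simp add: self_le_power)
  then show ?case using shift.IH by linarith
qed (use assms(2) in simp)

lemma Sset_add_multiple:
  assumes "n \<in> Sset d e r"
  shows "n + k * d \<in> Sset d e r"
proof (induction k)
  case (Suc k)
  have "(n + k * d + d) ^ e \<in> Sset d e r" using Suc by (rule Sset.shift)
  then have "n + k * d + d \<in> Sset d e r"
    by (rule Sset.root[rotated]) (use Sset_pos[OF assms] in simp)
  then show ?case by (simp add: algebra_simps)
qed (use assms in simp)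

lemma Sset_cong_upward:
  assumes "s \<in> Sset d e r" "s \<le> m" "[m = s] (mod d)"
  shows "m \<in> Sset d e r"
proof -
  obtain k where "m = k * d + s" using assms(2,3) cong_le_nat by blast
  then show ?thesis using Sset_add_multiple[OF assms(1), of k] by (simp add: add.commute)
qed

lemma Sset_root_iterated:
  assumes "n > 0" "n ^ (e ^ k) \<in> Sset d e r"
  shows "n \<in> Sset d e r"
  using assms(2)
proof (induction k)
  case (Suc k)
  have "(n ^ e ^ k) ^ e \<in> Sset d e r"
    using Suc.prems by (simp add: power_mult[symmetric] mult.commute)
  then have "n ^ e ^ k \<in> Sset d e r" by (rule Sset.root[rotated]) (use assms(1) in simp)
  then show ?case by (rule Suc.IH)
qed simp

lemma Sset_contains_cong_power:
  assumes "r > 0"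
  shows "\<exists>s\<in>Sset d e r. [s = r ^ (e ^ k)] (mod d)"
proof (induction k)
  case 0
  show ?case using Sset.base[OF assms, of d e] by (intro bexI[of _ r]) simp_all
next
  case (Suc k)
  then obtain s where s: "s \<in> Sset d e r" "[s = r ^ e ^ k] (mod d)" by blast
  have "[s + d = r ^ e ^ k] (mod d)" using s(2) by (simp add: cong_def)
  then have "[(s + d) ^ e = (r ^ e ^ k) ^ e] (mod d)" by (rule cong_pow)
  also have "(r ^ e ^ k) ^ e = r ^ e ^ Suc k" by (simp add: power_mult[symmetric] mult.commute)
  finally have "[(s + d) ^ e = r ^ e ^ Suc k] (mod d)" .
  then show ?case using Sset.shift[OF s(1)] by blast
qed

lemma Sset_prime_dvd_iff:
  assumes "n \<in> Sset d e r" "prime q" "q dvd d" "e > 0"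
  shows "q dvd n \<longleftrightarrow> q dvd r"
  using assms(1)
  by induction (use assms in \<open>auto simp: prime_dvd_power_iff dvd_add_left_iff\<close>)

lemma Sset_coprime:
  assumes "n \<in> Sset d e r" "coprime r d" "e > 0"
  shows "coprime n d"
  using assms(1)
proof induction
  case (shift n)
  then show ?case using assms(3) by (simp add: coprime_add_self_left_iff)
qed (use assms in simp_all)

lemma cong_power_one_coprime_exponent_iff:
  fixes x m :: nat
  assumes "coprime x m" "q * k = totient m" "coprime q e"
  shows "[(x ^ e) ^ k = 1] (mod m) \<longleftrightarrow> [x ^ k = 1] (mod m)"
proof
  assume "[(x ^ e) ^ k = 1] (mod m)"
  then have "[(x ^ k) ^ e = 1] (mod m)" by (simp add: power_mult[symmetric] mult.commute)
  then have "ord m (x ^ k) dvd e" using ord_divides by blast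
  moreover have "(x ^ k) ^ q = x ^ totient m" by (metis power_mult mult.commute assms(2))
  then have "[(x ^ k) ^ q = 1] (mod m)" using euler_theorem[OF assms(1)] by simp
  then have "ord m (x ^ k) dvd q" using ord_divides by blast
  ultimately have "ord m (x ^ k) = 1" using assms(3) coprime_common_divisor_nat by blast
  then show "[x ^ k = 1] (mod m)" using ord_eq_Suc_0_iff by simp
next
  assume "[x ^ k = 1] (mod m)"
  then show "[(x ^ e) ^ k = 1] (mod m)"
    using cong_pow[of "x ^ k" 1 m e] by (simp add: power_mult[symmetric] mult.commute)
qed

lemma Sset_power_residue_invariant:
  assumes "n \<in> Sset m e r" "coprime r m" "e > 0" "q * k = totient m" "coprime q e"
  shows "[n ^ k = 1] (mod m) \<longleftrightarrow> [r ^ k = 1] (mod m)"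
  using assms(1)
proof induction
  case (root n)
  have "coprime n m" using Sset_coprime[OF root.hyps(2) assms(2,3)] assms(3) by simp
  then show ?case using root.IH cong_power_one_coprime_exponent_iff[OF _ assms(4,5)] by blast
next
  case (shift n)
  have "coprime (n + m) m"
    using Sset_coprime[OF shift.hyps assms(2,3)] by (simp add: coprime_add_self_left_iff)
  have "[(n + m) ^ k = n ^ k] (mod m)" by (intro cong_pow) (simp add: cong_def)
  then have "[(n + m) ^ k = 1] (mod m) \<longleftrightarrow> [n ^ k = 1] (mod m)" by (simp add: cong_def)
  with \<open>coprime (n + m) m\<close> shift.IH show ?case
    using cong_power_one_coprime_exponent_iff[OF _ assms(4,5)] by blast
qed simp

lemma prod_primes_dvd_iff:
  fixes A :: "'a :: factorial_semiring_gcd set"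
  assumes "finite A" "\<forall>q\<in>A. prime q"
  shows "\<Prod>A dvd e \<longleftrightarrow> (\<forall>q\<in>A. q dvd e)"
  using assms
proof (induction A rule: finite_induct)
  case (insert x F)
  have "coprime x (\<Prod>F)"
    using insert by (intro prod_coprime_right primes_coprime) auto
  then show ?case using insert by (auto intro: divides_mult dvd_mult_left dvd_mult_right)
qed simp

lemma dvd_power_self_if_prime_factors_dvd:
  fixes m e :: nat
  assumes "m > 0" "\<forall>q\<in>prime_factors m. q dvd e"
  shows "m dvd e ^ m"
proof (cases "e = 0")
  case True
  then show ?thesis using assms(1) by (simp add: power_0_left)
next
  case False
  show ?thesis
  proof (rule multiplicity_le_imp_dvd)
    fix q :: nat
    assume q: "prime q"
    show "multiplicity q m \<le> multiplicity q (e ^ m)"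
    proof (cases "q dvd m")
      case False
      then show ?thesis by (simp add: not_dvd_imp_multiplicity_0)
    next
      case True
      have "multiplicity q m < 2 ^ multiplicity q m" by simp
      also have "\<dots> \<le> q ^ multiplicity q m" using prime_ge_2_nat[OF q] by (simp add: power_mono)
      also have "\<dots> \<le> m" using assms(1) by (simp add: dvd_imp_le multiplicity_dvd)
      finally have "multiplicity q m \<le> m" by simp
      moreover have "multiplicity q e \<ge> 1"
        using True assms q \<open>e \<noteq> 0\<close>
        by (auto simp: Suc_le_eq prime_multiplicity_gt_zero_iff in_prime_factors_iff)
      moreover have "multiplicity q (e ^ m) = m * multiplicity q e"
        using q \<open>e \<noteq> 0\<close> by (simp add: prime_elem_multiplicity_power_distrib)
      ultimately show ?thesis by (metis le_trans mult.right_neutral mult_le_mono)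
    qed
  qed (use assms(1) in simp)
qed

lemma cong_power_exp_power_one:
  fixes x m :: nat
  assumes "m > 0" "coprime x m" "\<forall>q\<in>prime_factors (totient m). q dvd e" "totient m \<le> K"
  shows "[x ^ e ^ K = 1] (mod m)"
proof -
  have "totient m dvd e ^ totient m"
    using assms(1,3) by (intro dvd_power_self_if_prime_factors_dvd) simp_all
  also have "\<dots> dvd e ^ K" using assms(4) by (rule le_imp_power_dvd)
  finally show ?thesis using euler_theorem[OF assms(2)] by (meson dvd_trans ord_divides)
qed

lemma Sset_contains_coprime:
  assumes "m > 0" "r > 0" "coprime r m" "e \<ge> 2" "\<forall>q\<in>prime_factors (totient m). q dvd e"
    and "n \<ge> 2" "coprime n m"
  shows "n \<in> Sset m e r"
proof -
  note power_cong_one = cong_power_exp_power_one[OF assms(1) _ assms(5)]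
  obtain s where s: "s \<in> Sset m e r" "[s = 1] (mod m)"
    using Sset_contains_cong_power[OF assms(2), of m e "totient m"]
      power_cong_one[OF assms(3) order.refl]
    by (metis cong_trans)
  define K where "K = totient m + s"
  have "s < 2 ^ s" by simp
  also have "\<dots> \<le> 2 ^ K" by (simp add: K_def power_increasing)
  also have "\<dots> \<le> e ^ K" using assms(4) by (simp add: power_mono)
  also have "\<dots> < 2 ^ e ^ K" by simp
  also have "\<dots> \<le> n ^ e ^ K" using assms(6) by (simp add: power_mono)
  finally have "s \<le> n ^ e ^ K" by simp
  moreover have "[n ^ e ^ K = 1] (mod m)" using power_cong_one[OF assms(7)] by (simp add: K_def)
  then have "[n ^ e ^ K = s] (mod m)" using s(2) by (simp add: cong_def)
  ultimately have "n ^ e ^ K \<in> Sset m e r" using Sset_cong_upward[OF s(1)] by blast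
  then show ?thesis using Sset_root_iterated assms(6) by simp
qed

lemma Sset_eq_imp_prime:
  assumes eq: "Sset d e r = {n. n \<ge> 2 \<and> \<not> d dvd n}" and "d \<ge> 2" "e > 0"
  shows "prime d"
proof (rule ccontr)
  assume "\<not> prime d"
  obtain q where q: "prime q" "q dvd d" using prime_factor_nat[of d] assms(2) by auto
  then have "q < d" using \<open>\<not> prime d\<close> dvd_imp_le[OF q(2)] assms(2) by (cases "q = d") auto
  then have "q \<in> Sset d e r"
    using eq prime_ge_2_nat[OF q(1)] by (simp add: nat_dvd_not_less)
  moreover have "d + 1 \<in> Sset d e r" using eq assms(2) dvd_add_triv_left_iff[of d 1] by simp
  ultimately have "q dvd d + 1" using Sset_prime_dvd_iff[OF _ q assms(3)] by (metis dvd_refl)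
  then show False using q dvd_add_right_iff not_prime_unit by blast
qed

lemma prime_exists_power_not_cong_one:
  assumes "prime p" "0 < k" "k < p - 1"
  shows "\<exists>g. \<not> p dvd g \<and> \<not> [g ^ k = 1] (mod p)"
proof -
  obtain g where "residue_primroot p g"
    using prime_primitive_root_exists[OF prime_gt_1_nat[OF assms(1)] assms(1)] by blast
  then have "coprime g p" and "ord p g = p - 1"
    by (auto simp: residue_primroot_def totient_prime[OF assms(1)] coprime_commute)
  then show ?thesis
    using assms ord_divides nat_dvd_not_less coprime_prime_right_iff by metis
qed

lemma Sset_eq_imp_prime_factors_dvd:
  assumes eq: "Sset p e r = {n. n \<ge> 2 \<and> \<not> p dvd n}" and p: "prime p" and "r > 0" "e > 0"
    and q: "q \<in> prime_factors (p - 1)"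
  shows "q dvd e"
proof (rule ccontr)
  have "prime q" "q dvd p - 1" using q by auto
  assume "\<not> q dvd e"
  with \<open>prime q\<close> have "coprime q e" by (rule prime_imp_coprime)
  define k where "k = (p - 1) div q"
  have qk: "q * k = totient p" using \<open>q dvd p - 1\<close> by (simp add: k_def totient_prime[OF p])
  have "0 < k" using qk prime_gt_1_nat[OF p] by (cases "k = 0") (auto simp: totient_prime[OF p])
  moreover have "1 < q" using \<open>prime q\<close> by (rule prime_gt_1_nat)
  ultimately have "k < p - 1" using qk n_less_m_mult_n[of k q] by (simp add: totient_prime[OF p])
  then obtain g where g: "\<not> p dvd g" "\<not> [g ^ k = 1] (mod p)"
    using prime_exists_power_not_cong_one[OF p \<open>0 < k\<close>] by blast
  have "r \<in> Sset p e r" using assms(3) by (rule Sset.base)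
  then have "coprime r p" using eq coprime_prime_right_iff[OF p] by simp
  have add_p: "[(x + p) ^ k = x ^ k] (mod p)" for x
    by (intro cong_pow) (simp only: cong_def mod_add_self2)
  have "g + p \<in> Sset p e r" "1 + p \<in> Sset p e r"
    using eq g(1) prime_ge_2_nat[OF p] dvd_add_triv_right_iff[of p 1] by simp_all
  then have "[(g + p) ^ k = 1] (mod p) \<longleftrightarrow> [(1 + p) ^ k = 1] (mod p)"
    using Sset_power_residue_invariant[OF _ \<open>coprime r p\<close> assms(4) qk \<open>coprime q e\<close>] by blast
  then show False using g(2) add_p[of g] add_p[of 1] cong_sym cong_trans by (metis power_one)
qed

theorem theorem17:
  fixes d e r :: nat
  assumes "d \<ge> 2" and "e \<ge> 2" and "r \<ge> 2"
  shows "Sset d e r = {n. n \<ge> 2 \<and> \<not> d dvd n} \<longleftrightarrow>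
           (prime d \<and> \<not> d dvd r \<and> (\<Prod>q\<in>prime_factors (d - 1). q) dvd e)"
proof
  assume eq: "Sset d e r = {n. n \<ge> 2 \<and> \<not> d dvd n}"
  have "prime d" using Sset_eq_imp_prime[OF eq] assms by simp
  moreover have "\<not> d dvd r" using eq Sset.base[of r d e] assms(3) by auto
  moreover have "(\<Prod>q\<in>prime_factors (d - 1). q) dvd e"
    using Sset_eq_imp_prime_factors_dvd[OF eq \<open>prime d\<close>] assms
    by (subst prod_primes_dvd_iff) auto
  ultimately show "prime d \<and> \<not> d dvd r \<and> (\<Prod>q\<in>prime_factors (d - 1). q) dvd e" by blast
next
  assume "prime d \<and> \<not> d dvd r \<and> (\<Prod>q\<in>prime_factors (d - 1). q) dvd e"
  then have p: "prime d" and "coprime r d" and rad: "\<forall>q\<in>prime_factors (totient d). q dvd e"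
    using prod_primes_dvd_iff[of "prime_factors (d - 1)" e]
    by (auto simp: coprime_prime_right_iff totient_prime)
  note coprime_iff = coprime_prime_right_iff[OF p]
  show "Sset d e r = {n. n \<ge> 2 \<and> \<not> d dvd n}"
  proof (intro equalityI subsetI)
    fix n assume "n \<in> Sset d e r"
    then show "n \<in> {n. n \<ge> 2 \<and> \<not> d dvd n}"
      using Sset_ge_2 Sset_coprime[OF _ \<open>coprime r d\<close>] coprime_iff assms by auto
  next
    fix n assume "n \<in> {n. n \<ge> 2 \<and> \<not> d dvd n}"
    then show "n \<in> Sset d e r"
      using assms \<open>coprime r d\<close> rad coprime_iff by (intro Sset_contains_coprime) auto
  qed
qed

end
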